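(* Let $G$ be a finite simple connected graph with exactly $h$ holes. Suppose that all the holes in $G$ are pairwise edge-disjoint and that $G$ has exactly one non-edge maximal clique $K$. If $|V(K)|=h+1$, then there exists a vertex $v\in V(K)$ satisfying one of the following: (a) there is no $K$-avoiding path from $v$ to any vertex of any hole of $G$; (b) $v$ is incident to an edge that belongs to both $K$ and some hole $H$ of $G$, and $v$ is not contained in any hole of $G$ other than $H$.
   Context: A hole of a graph is an induced (chordless) cycle of length at least $4$. A clique is a complete subgraph; a clique is non-edge if it has at least $3$ vertices. For a clique $K$ in $G$, a path $P$ in $G$ is called a $K$-avoiding path if $P$ is not an edge of $K$ and none of the internal vertices of $P$ lies on $K$. *)

theory Defs
  imports Main
begin

definition simple_graph :: "'a set \<Rightarrow> ('a \<Rightarrow> 'a \<Rightarrow> bool) \<Rightarrow> bool" where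
  "simple_graph V E \<longleftrightarrow> finite V \<and> (\<forall>x y. E x y \<longrightarrow> x \<in> V \<and> y \<in> V)
     \<and> (\<forall>x y. E x y \<longrightarrow> E y x) \<and> (\<forall>x. \<not> E x x)"

definition connected_on :: "'a set \<Rightarrow> ('a \<Rightarrow> 'a \<Rightarrow> bool) \<Rightarrow> bool" where
  "connected_on S E \<longleftrightarrow> S \<noteq> {} \<and>
     (\<forall>x\<in>S. \<forall>y\<in>S. (\<lambda>a b. a \<in> S \<and> b \<in> S \<and> E a b)\<^sup>*\<^sup>* x y)"

(* a hole, identified with its vertex set S: the induced subgraph on S is a cycle
   (connected and 2-regular) with at least 4 vertices *)
definition is_hole :: "'a set \<Rightarrow> ('a \<Rightarrow> 'a \<Rightarrow> bool) \<Rightarrow> 'a set \<Rightarrow> bool" where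
  "is_hole V E S \<longleftrightarrow> S \<subseteq> V \<and> finite S \<and> card S \<ge> 4 \<and> connected_on S E
     \<and> (\<forall>x\<in>S. card {y\<in>S. E x y} = 2)"

definition hole_edges :: "('a \<Rightarrow> 'a \<Rightarrow> bool) \<Rightarrow> 'a set \<Rightarrow> 'a set set" where
  "hole_edges E S = {{x, y} | x y. x \<in> S \<and> y \<in> S \<and> E x y}"

definition is_clique :: "'a set \<Rightarrow> ('a \<Rightarrow> 'a \<Rightarrow> bool) \<Rightarrow> 'a set \<Rightarrow> bool" where
  "is_clique V E K \<longleftrightarrow> K \<subseteq> V \<and> K \<noteq> {} \<and> (\<forall>x\<in>K. \<forall>y\<in>K. x \<noteq> y \<longrightarrow> E x y)"

definition is_maximal_clique :: "'a set \<Rightarrow> ('a \<Rightarrow> 'a \<Rightarrow> bool) \<Rightarrow> 'a set \<Rightarrow> bool" where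
  "is_maximal_clique V E K \<longleftrightarrow> is_clique V E K \<and> (\<forall>K'. is_clique V E K' \<and> K \<subseteq> K' \<longrightarrow> K' = K)"

definition non_edge_clique :: "'a set \<Rightarrow> bool" where
  "non_edge_clique K \<longleftrightarrow> finite K \<and> card K \<ge> 3"

definition is_path :: "('a \<Rightarrow> 'a \<Rightarrow> bool) \<Rightarrow> 'a list \<Rightarrow> bool" where
  "is_path E P \<longleftrightarrow> P \<noteq> [] \<and> distinct P \<and> (\<forall>i. Suc i < length P \<longrightarrow> E (P ! i) (P ! Suc i))"

(* K-avoiding: P is not an edge of K, and no internal vertex of P lies in K *)
definition K_avoiding :: "'a set \<Rightarrow> 'a list \<Rightarrow> bool" where
  "K_avoiding K P \<longleftrightarrow> \<not> (length P = 2 \<and> set P \<subseteq> K) \<and> set (butlast (tl P)) \<inter> K = {}"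

end

theory Submission
  imports Defs
begin

(* Suppose every vertex v of K violates both (a) and (b).  Since K is the
   only maximal clique with at least 3 vertices, every triangle of G lies inside K.
   Split K into T, the vertices lying on some hole, and U, the others.
   (1) A walk leaving a vertex v of K, running outside K and returning to another vertex
       of K can be shortened along chords to a chordless cycle of length at least 4,
       i.e. a hole through v (lemma K_bridge_hole).
   (2) Hence a K-avoiding path from v in U to a hole H never comes back to K, H avoids K,
       and two vertices of U never reach the same such hole: |U| <= #holes avoiding K.
   (3) A hole meets the clique K in at most 2 vertices; weighting each hole meeting K
       by 2 / |H \<inter> K| and using the failure of (b) gives |T| <= #holes meeting K.
   Adding up, |K| <= h, contradicting |K| = h + 1. *)

definition cycle_adjacent :: "nat \<Rightarrow> nat \<Rightarrow> nat \<Rightarrow> bool" where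
  "cycle_adjacent n a b \<longleftrightarrow>
     b = Suc a \<or> a = Suc b \<or> (a = 0 \<and> b = n - 1) \<or> (a = n - 1 \<and> b = 0)"

lemma card_cycle_neighbours:
  assumes "3 \<le> n" and "a < n"
  shows "card {b. b < n \<and> cycle_adjacent n a b} = 2"
proof -
  consider "a = 0" | "a = n - 1" | "0 < a" "a < n - 1" using assms by linarith
  then show ?thesis
  proof cases
    case 1
    then have "{b. b < n \<and> cycle_adjacent n a b} = {1, n - 1}"
      using assms by (auto simp: cycle_adjacent_def)
    then show ?thesis using assms by simp
  next
    case 2
    then have "{b. b < n \<and> cycle_adjacent n a b} = {n - 2, 0}"
      using assms by (auto simp: cycle_adjacent_def)
    then show ?thesis using assms by simp
  next
    case 3
    then have "{b. b < n \<and> cycle_adjacent n a b} = {a - 1, Suc a}"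
      using assms by (auto simp: cycle_adjacent_def)
    then show ?thesis by simp
  qed
qed

lemma cycle_is_hole:
  assumes graph: "simple_graph V E" and n: "4 \<le> n"
    and inj: "inj_on f {..<n}" and sub: "f ` {..<n} \<subseteq> V"
    and adj: "\<And>a b. a < n \<Longrightarrow> b < n \<Longrightarrow> E (f a) (f b) \<longleftrightarrow> cycle_adjacent n a b"
  shows "is_hole V E (f ` {..<n})"
proof -
  let ?S = "f ` {..<n}"
  let ?R = "\<lambda>a b. a \<in> ?S \<and> b \<in> ?S \<and> E a b"
  have "symp ?R" using graph unfolding simple_graph_def symp_def by blast
  then have R_sym: "?R\<^sup>*\<^sup>* x y \<Longrightarrow> ?R\<^sup>*\<^sup>* y x" for x y by (metis sympD symp_rtranclp)
  have from_start: "?R\<^sup>*\<^sup>* (f 0) (f a)" if "a < n" for a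
    using that
  proof (induction a)
    case 0 then show ?case by simp
  next
    case (Suc a)
    then have "?R (f a) (f (Suc a))" using adj[of a "Suc a"] by (auto simp: cycle_adjacent_def)
    moreover have "?R\<^sup>*\<^sup>* (f 0) (f a)" using Suc by simp
    ultimately show ?case by (simp add: rtranclp.rtrancl_into_rtrancl)
  qed
  have "connected_on ?S E"
    unfolding connected_on_def
  proof (intro conjI ballI)
    show "?S \<noteq> {}" using n by (auto simp: lessThan_empty_iff)
    fix x y assume "x \<in> ?S" "y \<in> ?S"
    then obtain a b where "a < n" "b < n" "x = f a" "y = f b" by auto
    then show "?R\<^sup>*\<^sup>* x y" using from_start R_sym by (meson rtranclp_trans)
  qed
  moreover have "card {y \<in> ?S. E x y} = 2" if "x \<in> ?S" for x
  proof -
    obtain a where a: "a < n" "x = f a" using \<open>x \<in> ?S\<close> by auto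
    let ?I = "{b. b < n \<and> cycle_adjacent n a b}"
    have "{y \<in> ?S. E x y} = f ` ?I" using a adj by auto
    moreover have "inj_on f ?I" using inj by (rule inj_on_subset) auto
    ultimately show ?thesis using card_cycle_neighbours[OF _ a(1)] n by (simp add: card_image)
  qed
  moreover have "card ?S = n" using inj by (simp add: card_image)
  ultimately show ?thesis unfolding is_hole_def using sub n by auto
qed

lemma walk_chain_rtranclp:
  assumes "\<forall>i<m. R (g i) (g (Suc i))"
  shows "R\<^sup>*\<^sup>* (g 0) (g m)"
proof -
  have "(R ^^ m) (g 0) (g m)" using assms unfolding relpowp_fun_conv by blast
  then show ?thesis by (rule relpowp_imp_rtranclp)
qed

lemma rtranclp_walk:
  assumes "R\<^sup>*\<^sup>* x y"
  obtains m g where "g 0 = x" "g m = y" "\<forall>i<m. R (g i) (g (Suc i))"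
  using rtranclp_imp_relpowp[OF assms] unfolding relpowp_fun_conv by blast

(* Each b distributes
   weight 2 evenly among its elements, and every element receives at least 2. *)
lemma card_le_by_double_counting:
  fixes A :: "'a set" and B :: "'b set" and R :: "'a \<Rightarrow> 'b \<Rightarrow> bool"
  assumes finA: "finite A" and finB: "finite B"
    and block_size: "\<And>b. b \<in> B \<Longrightarrow> card {a \<in> A. R a b} \<in> {1, 2}"
    and covered: "\<And>a. a \<in> A \<Longrightarrow>
      (\<exists>b\<in>B. R a b \<and> card {a' \<in> A. R a' b} = 1) \<or> (\<exists>b\<in>B. \<exists>b'\<in>B. b \<noteq> b' \<and> R a b \<and> R a b')"
  shows "card A \<le> card B"
proof -
  define w where "w b = 2 div card {a \<in> A. R a b}" for b
  have w_pos: "1 \<le> w b" and block_weight: "card {a \<in> A. R a b} * w b = 2" if "b \<in> B" for b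
    using block_size[OF that] unfolding w_def by auto
  have "(\<Sum>a\<in>A. 2::nat) \<le> (\<Sum>a\<in>A. \<Sum>b\<in>{b \<in> B. R a b}. w b)"
  proof (rule sum_mono)
    fix a assume a: "a \<in> A"
    have fin: "finite {b \<in> B. R a b}" using finB by simp
    from covered[OF a] show "2 \<le> (\<Sum>b\<in>{b \<in> B. R a b}. w b)"
    proof (elim disjE bexE conjE)
      fix b assume "b \<in> B" "R a b" "card {a' \<in> A. R a' b} = 1"
      then have "w b = 2" unfolding w_def by simp
      with \<open>b \<in> B\<close> \<open>R a b\<close> show ?thesis using member_le_sum[OF _ _ fin, of b w] by simp
    next
      fix b b' assume bb': "b \<in> B" "b' \<in> B" "b \<noteq> b'" "R a b" "R a b'"
      then have "w b + w b' \<le> (\<Sum>b\<in>{b \<in> B. R a b}. w b)"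
        using sum_mono2[OF fin, of "{b, b'}" w] by simp
      with w_pos[OF bb'(1)] w_pos[OF bb'(2)] show ?thesis by simp
    qed
  qed
  also have "\<dots> = (\<Sum>b\<in>B. \<Sum>a\<in>{a \<in> A. R a b}. w b)"
    by (rule sum.swap_restrict[OF finA finB])
  also have "\<dots> = (\<Sum>b\<in>B. 2)"
    using block_weight by (intro sum.cong) auto
  finally show ?thesis by simp
qed

lemma card_filter_split:
  assumes "finite A"
  shows "card A = card {x \<in> A. P x} + card {x \<in> A. \<not> P x}"
proof -
  have "card ({x \<in> A. P x} \<union> {x \<in> A. \<not> P x}) = card {x \<in> A. P x} + card {x \<in> A. \<not> P x}"
    using assms by (intro card_Un_disjoint) auto
  moreover have "{x \<in> A. P x} \<union> {x \<in> A. \<not> P x} = A" by blast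
  ultimately show ?thesis by simp
qed

lemma finite_holes:
  assumes "simple_graph V E"
  shows "finite {S. is_hole V E S}"
proof (rule finite_subset[of _ "Pow V"])
  show "finite (Pow V)" using assms by (simp add: simple_graph_def)
qed (auto simp: is_hole_def)

(* In a finite graph every clique lies in a maximal one (take a largest clique above it). *)
lemma clique_extends_to_maximal:
  assumes finV: "finite V" and Q: "is_clique V E Q"
  shows "\<exists>M. is_maximal_clique V E M \<and> Q \<subseteq> M"
proof -
  define C where "C = {Q'. is_clique V E Q' \<and> Q \<subseteq> Q'}"
  have finC: "finite C"
    by (rule finite_subset[of _ "Pow V"]) (auto simp: C_def is_clique_def finV)
  have "Q \<in> C" using Q by (simp add: C_def)
  then have "Max (card ` C) \<in> card ` C" using finC by (intro Max_in) auto
  then obtain M where M: "M \<in> C" "card M = Max (card ` C)" by auto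
  have M_max: "card Q' \<le> card M" if "Q' \<in> C" for Q'
    using M(2) finC that by simp
  have "is_maximal_clique V E M"
    unfolding is_maximal_clique_def
  proof (intro conjI allI impI)
    show "is_clique V E M" using M by (simp add: C_def)
    fix K' assume K': "is_clique V E K' \<and> M \<subseteq> K'"
    then have "K' \<in> C" using M by (auto simp: C_def)
    moreover have "finite K'" using K' finV by (meson finite_subset is_clique_def)
    ultimately have "card K' \<le> card M" "card M \<le> card K'" using K' M_max by (auto intro: card_mono)
    then show "K' = M" using K' \<open>finite K'\<close> by (metis card_seteq)
  qed
  then show ?thesis using M by (auto simp: C_def)
qed

lemma triangle_in_unique_clique:
  assumes graph: "simple_graph V E"
    and unique: "\<forall>K'. is_maximal_clique V E K' \<and> non_edge_clique K' \<longrightarrow> K' = K"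
    and edges: "E a b" "E b c" "E a c"
  shows "b \<in> K"
proof -
  have "finite V" and irrefl: "\<And>x. \<not> E x x" using graph unfolding simple_graph_def by blast+
  then have distinct: "a \<noteq> b" "b \<noteq> c" "a \<noteq> c" using edges by metis+
  have "is_clique V E {a, b, c}"
    using graph edges unfolding is_clique_def simple_graph_def by blast
  then obtain M where M: "is_maximal_clique V E M" "{a, b, c} \<subseteq> M"
    using clique_extends_to_maximal \<open>finite V\<close> by blast
  have "finite M" using M(1) \<open>finite V\<close> unfolding is_maximal_clique_def is_clique_def
    by (meson finite_subset)
  then have "card {a, b, c} \<le> card M" using M(2) by (rule card_mono)
  then have "non_edge_clique M" using distinct \<open>finite M\<close> by (simp add: non_edge_clique_def)
  then show ?thesis using unique M by blast
qed

locale triangle_clique_graph =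
  fixes V :: "'a set" and E :: "'a \<Rightarrow> 'a \<Rightarrow> bool" and K :: "'a set"
  assumes graph: "simple_graph V E"
    and K_sub: "K \<subseteq> V"
    and clique: "\<And>x y. x \<in> K \<Longrightarrow> y \<in> K \<Longrightarrow> x \<noteq> y \<Longrightarrow> E x y"
    and triangle: "\<And>a b c. E a b \<Longrightarrow> E b c \<Longrightarrow> E a c \<Longrightarrow> b \<in> K"
begin

lemma edge_sym: "E a b \<Longrightarrow> E b a"
  and edge_irrefl: "\<not> E a a"
  and edge_in_V: "E a b \<Longrightarrow> a \<in> V"
  using graph unfolding simple_graph_def by blast+

abbreviation on_hole :: "'a \<Rightarrow> bool" where
  "on_hole v \<equiv> \<exists>H. is_hole V E H \<and> v \<in> H"

abbreviation outside_edge :: "'a \<Rightarrow> 'a \<Rightarrow> bool" where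
  "outside_edge a b \<equiv> E a b \<and> a \<notin> K \<and> b \<notin> K"

definition K_ear :: "nat \<Rightarrow> (nat \<Rightarrow> 'a) \<Rightarrow> bool" where
  "K_ear n f \<longleftrightarrow> 3 \<le> n \<and> f 0 \<in> K \<and> f (n - 1) \<in> K \<and> f 0 \<noteq> f (n - 1)
     \<and> (\<forall>i. Suc i < n \<longrightarrow> E (f i) (f (Suc i))) \<and> (\<forall>i. 0 < i \<and> i < n - 1 \<longrightarrow> f i \<notin> K)"

(* A chord of a K-ear (other than the closing edge between its ends) cuts out a shorter
   K-ear with the same starting vertex. *)
lemma K_ear_shortcut:
  assumes ear: "K_ear n f"
    and chord: "i + 2 \<le> j" "j < n" "\<not> (i = 0 \<and> j = n - 1)" "E (f i) (f j)"
  shows "K_ear (Suc i + n - j) (\<lambda>a. if a \<le> i then f a else f (a - Suc i + j))"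
proof -
  define g where "g = (\<lambda>a. if a \<le> i then f a else f (a - Suc i + j))"
  define m where "m = Suc i + n - j"
  have g_step: "E (g a) (g (Suc a))" if "Suc a < m" for a
  proof -
    consider "a < i" | "a = i" | "i < a" by linarith
    then show ?thesis
    proof cases
      case 1 then show ?thesis using ear chord unfolding g_def K_ear_def by auto
    next
      case 2 then show ?thesis using chord unfolding g_def by auto
    next
      case 3
      then have shift: "Suc a - Suc i + j = Suc (a - Suc i + j)" by simp
      have "g a = f (a - Suc i + j)" "g (Suc a) = f (Suc (a - Suc i + j))"
        unfolding g_def using 3 shift by (simp_all del: diff_Suc_Suc)
      moreover have "Suc (a - Suc i + j) < n" using that 3 chord unfolding m_def by auto
      ultimately show ?thesis using ear unfolding K_ear_def by auto
    qed
  qed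
  have g_inner: "g a \<notin> K" if "0 < a" "a < m - 1" for a
  proof (cases "a \<le> i")
    case True then show ?thesis using ear that chord unfolding g_def K_ear_def by auto
  next
    case False
    then have "0 < a - Suc i + j" "a - Suc i + j < n - 1" using that chord unfolding m_def by auto
    then show ?thesis using ear False unfolding g_def K_ear_def by auto
  qed
  have "g 0 = f 0" "g (m - 1) = f (n - 1)" "3 \<le> m"
    using chord unfolding g_def m_def by auto
  then show ?thesis using ear g_step g_inner unfolding K_ear_def g_def m_def by auto
qed

context
  fixes n :: nat and f :: "nat \<Rightarrow> 'a"
  assumes ear: "K_ear n f"
    and chordless: "\<And>i j. i + 2 \<le> j \<Longrightarrow> j < n \<Longrightarrow> E (f i) (f j) \<Longrightarrow> i = 0 \<and> j = n - 1"
begin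

lemma chordless_ear_closing_edge: "E (f 0) (f (n - 1))"
  using ear clique unfolding K_ear_def by blast

lemma chordless_ear_step: "Suc a < n \<Longrightarrow> E (f a) (f (Suc a))"
  using ear unfolding K_ear_def by blast

(* A K-ear of length 3 would be a triangle with its middle vertex outside K. *)
lemma chordless_ear_long: "4 \<le> n"
proof (rule ccontr)
  assume "\<not> 4 \<le> n"
  then have n3: "n = 3" using ear unfolding K_ear_def by simp
  have "E (f 0) (f 1)" "E (f 1) (f 2)" "E (f 0) (f 2)"
    using chordless_ear_step[of 0] chordless_ear_step[of 1] chordless_ear_closing_edge n3
    by (simp_all add: numeral_2_eq_2)
  then have "f 1 \<in> K" by (rule triangle)
  then show False using ear n3 unfolding K_ear_def by auto
qed

lemma chordless_ear_adjacent:
  assumes "a < n" "b < n"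
  shows "E (f a) (f b) \<longleftrightarrow> cycle_adjacent n a b"
proof
  assume e: "E (f a) (f b)"
  then have "a \<noteq> b" using edge_irrefl by auto
  then consider "a < b" | "b < a" by linarith
  then show "cycle_adjacent n a b"
  proof cases
    case 1 then show ?thesis
      using chordless[of a b] e assms unfolding cycle_adjacent_def by (cases "b = Suc a") auto
  next
    case 2 then show ?thesis
      using chordless[of b a] edge_sym[OF e] assms unfolding cycle_adjacent_def by (cases "a = Suc b") auto
  qed
next
  assume "cycle_adjacent n a b"
  then show "E (f a) (f b)"
    using assms chordless_ear_step chordless_ear_closing_edge edge_sym
    unfolding cycle_adjacent_def by auto
qed

(* The vertices of a chordless ear are distinct: a repetition f x = f y with x < y
   turns the edge leaving f y into a chord at f x. *)
lemma chordless_ear_inj: "inj_on f {..<n}"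
proof -
  have no_repeat: False if "x < y" "y < n" "f x = f y" for x y
  proof -
    have "0 < x"
    proof (rule ccontr)
      assume "\<not> 0 < x"
      then have "x = 0" by simp
      then have "f y \<in> K" "f 0 \<noteq> f (n - 1)" using that ear unfolding K_ear_def by auto
      moreover have "\<not> (0 < y \<and> y < n - 1)" using \<open>f y \<in> K\<close> ear unfolding K_ear_def by blast
      ultimately have "y = n - 1" using that \<open>x = 0\<close> by linarith
      then show False using \<open>f 0 \<noteq> f (n - 1)\<close> that \<open>x = 0\<close> by simp
    qed
    then have "f x \<notin> K" using that ear unfolding K_ear_def by auto
    then have "y < n - 1" using that ear unfolding K_ear_def by (cases "y = n - 1") auto
    then have "E (f x) (f (Suc y))" using chordless_ear_step[of y] that by simp
    moreover have "x + 2 \<le> Suc y" "Suc y < n" using that \<open>y < n - 1\<close> by linarith+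
    ultimately show False using chordless[of x "Suc y"] \<open>0 < x\<close> by simp
  qed
  show ?thesis
  proof (rule inj_onI)
    fix a b assume "a \<in> {..<n}" "b \<in> {..<n}" "f a = f b"
    then show "a = b" using no_repeat[of a b] no_repeat[of b a] by (cases a b rule: linorder_cases) auto
  qed
qed

lemma chordless_ear_hole: "is_hole V E (f ` {..<n})"
proof (rule cycle_is_hole[OF graph chordless_ear_long chordless_ear_inj])
  show "f ` {..<n} \<subseteq> V"
  proof
    fix x assume "x \<in> f ` {..<n}"
    then obtain a where a: "a < n" "x = f a" by auto
    show "x \<in> V"
    proof (cases "Suc a < n")
      case True then show ?thesis using chordless_ear_step edge_in_V a by blast
    next
      case False
      then have "a = n - 1" using a by simp
      then show ?thesis using chordless_ear_closing_edge edge_sym edge_in_V a by blast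
    qed
  qed
qed (rule chordless_ear_adjacent)

end

(* Step (1): every K-ear starts on a hole -- shortcut chords until the ear is chordless. *)
lemma K_ear_hole: "K_ear n f \<Longrightarrow> on_hole (f 0)"
proof (induction n arbitrary: f rule: less_induct)
  case (less n f)
  show ?case
  proof (cases "\<exists>i j. i + 2 \<le> j \<and> j < n \<and> \<not> (i = 0 \<and> j = n - 1) \<and> E (f i) (f j)")
    case True
    then obtain i j where chord: "i + 2 \<le> j" "j < n" "\<not> (i = 0 \<and> j = n - 1)" "E (f i) (f j)"
      by blast
    have "on_hole ((\<lambda>a. if a \<le> i then f a else f (a - Suc i + j)) 0)"
      using less.IH[OF _ K_ear_shortcut[OF less.prems chord]] chord by simp
    then show ?thesis by simp
  next
    case False
    then have "is_hole V E (f ` {..<n})" using chordless_ear_hole[OF less.prems] by blast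
    moreover have "f 0 \<in> f ` {..<n}" using less.prems unfolding K_ear_def by auto
    ultimately show ?thesis by blast
  qed
qed

lemma outside_reach_outside: "outside_edge\<^sup>*\<^sup>* x y \<Longrightarrow> x \<notin> K \<Longrightarrow> y \<notin> K"
  by (induction rule: rtranclp_induct) auto

lemma K_bridge_hole:
  assumes ends: "v \<in> K" "w \<in> K" "v \<noteq> w"
    and bridge: "E v x" "x \<notin> K" "outside_edge\<^sup>*\<^sup>* x y" "E y w"
  shows "on_hole v"
proof -
  obtain m g where g: "g 0 = x" "g m = y" "\<forall>i<m. outside_edge (g i) (g (Suc i))"
    using rtranclp_walk[OF bridge(3)] by blast
  have g_outside: "g i \<notin> K" if "i \<le> m" for i
    using that g outside_reach_outside[OF bridge(3,2)] by (cases "i = m") auto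
  define f where "f i = (if i = 0 then v else if i \<le> Suc m then g (i - 1) else w)" for i
  have "E (f i) (f (Suc i))" if i: "Suc i < m + 3" for i
  proof -
    consider "i = 0" | "0 < i" "i \<le> m" | "i = Suc m" using i by linarith
    then show ?thesis
    proof cases
      case 2
      then have "f i = g (i - 1)" "f (Suc i) = g (Suc (i - 1))" "i - 1 < m"
        unfolding f_def by auto
      then show ?thesis using g by simp
    qed (use bridge g in \<open>auto simp: f_def\<close>)
  qed
  moreover have "f i \<notin> K" if "0 < i" "i < m + 3 - 1" for i
    using that g_outside[of "i - 1"] unfolding f_def by auto
  ultimately have "K_ear (m + 3) f" using ends unfolding K_ear_def f_def by auto
  from K_ear_hole[OF this] show ?thesis by (simp add: f_def)
qed

lemma K_avoiding_path_inner:
  assumes "K_avoiding K P" "0 < i" "Suc i < length P"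
  shows "P ! i \<notin> K"
proof -
  have "butlast (tl P) ! (i - 1) = P ! i" "i - 1 < length (butlast (tl P))"
    using assms by (simp_all add: nth_butlast nth_tl)
  then have "P ! i \<in> set (butlast (tl P))" by (metis nth_mem)
  then show ?thesis using assms(1) unfolding K_avoiding_def by blast
qed

(* A K-avoiding path from a vertex v of K on no hole never ends in K again (an end in K
   would be an edge of K or close a K-ear), so it runs outside K after its first edge. *)
lemma K_avoiding_path_exit:
  assumes path: "is_path E P" "K_avoiding K P" "hd P = v"
    and v: "v \<in> K" "\<not> on_hole v" and far: "last P \<noteq> v"
  shows "last P \<notin> K \<and> (\<exists>x. E v x \<and> x \<notin> K \<and> outside_edge\<^sup>*\<^sup>* x (last P))"
proof -
  define k where "k = length P - 1"
  have "P \<noteq> []" using path unfolding is_path_def by simp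
  then have first: "P ! 0 = v" and last: "last P = P ! k"
    using path(3) unfolding k_def by (simp_all add: hd_conv_nth last_conv_nth)
  have "1 \<le> k" using first last far by (cases k) auto
  have step: "E (P ! i) (P ! Suc i)" if "i < k" for i
    using that path(1) unfolding is_path_def k_def by simp
  have inner: "P ! i \<notin> K" if "0 < i" "i < k" for i
    using K_avoiding_path_inner[OF path(2) that(1)] that(2) unfolding k_def by simp
  have chain: "outside_edge\<^sup>*\<^sup>* (P ! 1) (P ! j)" if "0 < j" "j < k" for j
    using walk_chain_rtranclp[of "j - 1" outside_edge "\<lambda>i. P ! Suc i"] that step inner by simp
  have "last P \<notin> K"
  proof
    assume "last P \<in> K"
    show False
    proof (cases "k = 1")
      case True
      then have "length P = 2" "set P = {v, last P}"
        using \<open>P \<noteq> []\<close> first last unfolding k_def by (cases P; cases "tl P"; auto)+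
      then show False using path(2) v(1) \<open>last P \<in> K\<close> unfolding K_avoiding_def by simp
    next
      case False
      then have "on_hole v"
        using K_bridge_hole[OF v(1) \<open>last P \<in> K\<close> far[symmetric], of "P ! 1" "P ! (k - 1)"]
          step[of 0] step[of "k - 1"] inner[of 1] chain[of "k - 1"] first last \<open>1 \<le> k\<close> by simp
      then show False using v(2) by simp
    qed
  qed
  moreover have "P ! 1 \<notin> K"
    using inner[of 1] \<open>last P \<notin> K\<close> last \<open>1 \<le> k\<close> by (cases "k = 1") auto
  moreover have "outside_edge\<^sup>*\<^sup>* (P ! 1) (last P)"
  proof (cases "k = 1")
    case False
    then have "outside_edge (P ! (k - 1)) (P ! k)"
      using step[of "k - 1"] inner[of "k - 1"] \<open>last P \<notin> K\<close> last \<open>1 \<le> k\<close> by simp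
    then show ?thesis using chain[of "k - 1"] False \<open>1 \<le> k\<close> last
      by (simp add: rtranclp.rtrancl_into_rtrancl)
  qed (simp add: last)
  ultimately show ?thesis using step[of 0] first \<open>1 \<le> k\<close> by auto
qed

lemma hole_reach: "is_hole V E H \<Longrightarrow> x \<in> H \<Longrightarrow> y \<in> H \<Longrightarrow>
    (\<lambda>p q. p \<in> H \<and> q \<in> H \<and> E p q)\<^sup>*\<^sup>* x y"
  unfolding is_hole_def connected_on_def by blast

(* A hole reached from v (on no hole) by a walk outside K avoids K: otherwise walking on
   along the hole until its first vertex in K closes a K-ear at v. *)
lemma outside_exit_hole_disjoint:
  assumes v: "v \<in> K" "\<not> on_hole v"
    and exit: "E v x" "x \<notin> K" "outside_edge\<^sup>*\<^sup>* x y"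
    and H: "is_hole V E H" "y \<in> H"
  shows "H \<inter> K = {}"
proof -
  have "z \<notin> K \<and> outside_edge\<^sup>*\<^sup>* x z" if "(\<lambda>p q. p \<in> H \<and> q \<in> H \<and> E p q)\<^sup>*\<^sup>* y z" for z
    using that
  proof (induction rule: rtranclp_induct)
    case base then show ?case using exit outside_reach_outside by blast
  next
    case (step z z')
    have "z' \<notin> K"
    proof
      assume "z' \<in> K"
      moreover have "v \<noteq> z'" using step.hyps(2) H(1) v(2) by blast
      ultimately have "on_hole v"
        using K_bridge_hole[OF v(1) _ _ exit(1,2)] step by blast
      then show False using v(2) by simp
    qed
    then show ?case using step by (auto intro: rtranclp.rtrancl_into_rtrancl)
  qed
  then show ?thesis using hole_reach[OF H] by blast
qed

definition escapes_to :: "'a \<Rightarrow> 'a set \<Rightarrow> bool" where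
  "escapes_to v H \<longleftrightarrow> is_hole V E H \<and> H \<inter> K = {}
     \<and> (\<exists>x y. E v x \<and> x \<notin> K \<and> outside_edge\<^sup>*\<^sup>* x y \<and> y \<in> H)"

lemma K_avoiding_path_escape:
  assumes v: "v \<in> K" "\<not> on_hole v"
    and path: "is_path E P" "K_avoiding K P" "hd P = v" and H: "is_hole V E H" "last P \<in> H"
  shows "escapes_to v H"
proof -
  have "last P \<noteq> v" using v(2) H by blast
  then obtain x where "E v x" "x \<notin> K" "outside_edge\<^sup>*\<^sup>* x (last P)"
    using K_avoiding_path_exit[OF path v] by blast
  then show ?thesis
    using outside_exit_hole_disjoint[OF v] H unfolding escapes_to_def by blast
qed

(* Step (2), uniqueness: two distinct vertices of K escaping to the same hole are joined
   by a walk outside K through the hole, which closes a K-ear. *)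
lemma common_escape_on_hole:
  assumes "v \<in> K" "v' \<in> K" "v \<noteq> v'" "escapes_to v H" "escapes_to v' H"
  shows "on_hole v"
proof -
  obtain x y x' y' where esc: "E v x" "x \<notin> K" "outside_edge\<^sup>*\<^sup>* x y" "y \<in> H"
      "E v' x'" "x' \<notin> K" "outside_edge\<^sup>*\<^sup>* x' y'" "y' \<in> H"
    and H: "is_hole V E H" "H \<inter> K = {}"
    using assms(4,5) unfolding escapes_to_def by blast
  have "symp outside_edge" using edge_sym by (auto simp: symp_def)
  then have "outside_edge\<^sup>*\<^sup>* y' x'" using esc(7) by (blast intro: symp_rtranclp[THEN sympD])
  moreover have "outside_edge\<^sup>*\<^sup>* y y'"
    using hole_reach[OF H(1) esc(4,8)] by (rule mono_rtranclp[rule_format, rotated]) (use H(2) in blast)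
  ultimately have "outside_edge\<^sup>*\<^sup>* x x'" using esc(3) by (meson rtranclp_trans)
  then show ?thesis using K_bridge_hole[OF assms(1-3) esc(1,2)] esc(6) edge_sym[OF esc(5)] by blast
qed

lemma off_hole_count:
  assumes reach: "\<And>v. v \<in> K \<Longrightarrow> \<not> on_hole v \<Longrightarrow>
      \<exists>P H. is_path E P \<and> K_avoiding K P \<and> hd P = v \<and> is_hole V E H \<and> last P \<in> H"
  shows "card {v \<in> K. \<not> on_hole v} \<le> card {H. is_hole V E H \<and> H \<inter> K = {}}"
proof (rule card_le_if_inj_on_rel[where r = escapes_to])
  show "finite {H. is_hole V E H \<and> H \<inter> K = {}}"
    using finite_holes[OF graph] by (rule rev_finite_subset) blast
  fix v assume v: "v \<in> {v \<in> K. \<not> on_hole v}"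
  then obtain P H where "is_path E P" "K_avoiding K P" "hd P = v" "is_hole V E H" "last P \<in> H"
    using reach by blast
  then have "escapes_to v H" using K_avoiding_path_escape v by blast
  then show "\<exists>H. H \<in> {H. is_hole V E H \<and> H \<inter> K = {}} \<and> escapes_to v H"
    unfolding escapes_to_def by blast
next
  fix v v' H
  assume "v \<in> {v \<in> K. \<not> on_hole v}" "v' \<in> {v \<in> K. \<not> on_hole v}" "escapes_to v H" "escapes_to v' H"
  then show "v = v'" using common_escape_on_hole[of v v' H] by blast
qed

lemma K_finite: "finite K"
  using graph K_sub finite_subset unfolding simple_graph_def by blast

(* A hole meets the clique K in at most two vertices: three of them would be each
   other's only neighbours on the hole, so the (connected) hole would have 3 vertices. *)
lemma hole_meets_K_le2:
  assumes H: "is_hole V E H"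
  shows "card (H \<inter> K) \<le> 2"
proof (rule ccontr)
  assume "\<not> card (H \<inter> K) \<le> 2"
  then have "Suc (Suc (Suc 0)) \<le> card (H \<inter> K)" by simp
  then obtain a b c where abc: "a \<in> H \<inter> K" "b \<in> H \<inter> K" "c \<in> H \<inter> K" "a \<noteq> b" "a \<noteq> c" "b \<noteq> c"
    by (auto simp: card_le_Suc_iff)
  have finH: "finite H" and long: "4 \<le> card H"
    and deg: "\<And>x. x \<in> H \<Longrightarrow> card {y \<in> H. E x y} = 2"
    using H unfolding is_hole_def by auto
  have neighbours: "{y \<in> H. E x y} = {p, q}"
    if "x \<in> H \<inter> K" "p \<in> H \<inter> K" "q \<in> H \<inter> K" "p \<noteq> q" "x \<noteq> p" "x \<noteq> q" for x p q
  proof -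
    have "{p, q} \<subseteq> {y \<in> H. E x y}" using that clique by auto
    moreover have "card {p, q} = card {y \<in> H. E x y}" using deg that by simp
    moreover have "finite {y \<in> H. E x y}" using finH by simp
    ultimately show ?thesis using card_subset_eq by blast
  qed
  have closed: "z \<in> {a, b, c}" if "(\<lambda>p q. p \<in> H \<and> q \<in> H \<and> E p q)\<^sup>*\<^sup>* a z" for z
    using that
  proof (induction rule: rtranclp_induct)
    case (step y z)
    then show ?case
      using neighbours[of a b c] neighbours[of b a c] neighbours[of c a b] abc by auto
  qed simp
  have "H \<subseteq> {a, b, c}" using closed hole_reach[OF H] abc by blast
  then have "card H \<le> card {a, b, c}" by (simp add: card_mono)
  also have "\<dots> \<le> 3" by (simp add: card_insert_if)
  finally show False using long by simp
qed

lemma on_hole_count: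
  assumes second_hole: "\<And>v u H. v \<in> K \<Longrightarrow> u \<in> K \<Longrightarrow> E v u \<Longrightarrow> is_hole V E H \<Longrightarrow>
      {v, u} \<in> hole_edges E H \<Longrightarrow> \<exists>H'. is_hole V E H' \<and> v \<in> H' \<and> H' \<noteq> H"
  shows "card {v \<in> K. on_hole v} \<le> card {H. is_hole V E H \<and> H \<inter> K \<noteq> {}}"
proof (rule card_le_by_double_counting[where R = "\<lambda>v H. v \<in> H"])
  let ?B = "{H. is_hole V E H \<and> H \<inter> K \<noteq> {}}"
  have block: "{v \<in> {v \<in> K. on_hole v}. v \<in> H} = H \<inter> K" if "is_hole V E H" for H
    using that by blast
  show "finite {v \<in> K. on_hole v}" using K_finite by simp
  show "finite ?B" using finite_holes[OF graph] by (rule rev_finite_subset) blast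
  show "card {v \<in> {v \<in> K. on_hole v}. v \<in> H} \<in> {1, 2}" if "H \<in> ?B" for H
  proof -
    have "card (H \<inter> K) \<noteq> 0" using that K_finite by simp
    then show ?thesis using hole_meets_K_le2[of H] block[of H] that by auto
  qed
  fix v assume "v \<in> {v \<in> K. on_hole v}"
  then obtain H where v: "v \<in> K" "v \<in> H" and H: "is_hole V E H" by blast
  then have HB: "H \<in> ?B" by blast
  show "(\<exists>H\<in>?B. v \<in> H \<and> card {v \<in> {v \<in> K. on_hole v}. v \<in> H} = 1)
      \<or> (\<exists>H\<in>?B. \<exists>H'\<in>?B. H \<noteq> H' \<and> v \<in> H \<and> v \<in> H')"
  proof (cases "card (H \<inter> K) = 1")
    case True
    then show ?thesis using HB v block[OF H] by auto
  next
    case False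
    have "card (H \<inter> K) \<noteq> 0" using v K_finite by auto
    then have "card (H \<inter> K) = 2" using False hole_meets_K_le2[OF H] by linarith
    then have "card (H \<inter> K - {v}) = 1" using v by (simp add: card_Diff_singleton)
    then obtain u where "H \<inter> K - {v} = {u}" by (rule card_1_singletonE)
    then have u: "u \<in> H" "u \<in> K" "u \<noteq> v" by auto
    have "E v u" using clique v u by blast
    moreover have "{v, u} \<in> hole_edges E H"
      using v u \<open>E v u\<close> unfolding hole_edges_def by blast
    ultimately obtain H' where "is_hole V E H'" "v \<in> H'" "H' \<noteq> H"
      using second_hole[OF v(1) u(2) _ H] by blast
    then show ?thesis using HB v by blast
  qed
qed

end

theorem lemma3:
  fixes V :: "'a set" and E :: "'a \<Rightarrow> 'a \<Rightarrow> bool" and K :: "'a set" and h :: nat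
  assumes "simple_graph V E"
    and "connected_on V E"
    and "card {S. is_hole V E S} = h"
    and "\<forall>S T. is_hole V E S \<and> is_hole V E T \<and> S \<noteq> T \<longrightarrow> hole_edges E S \<inter> hole_edges E T = {}"
    and "is_maximal_clique V E K" and "non_edge_clique K"
    and "\<forall>K'. is_maximal_clique V E K' \<and> non_edge_clique K' \<longrightarrow> K' = K"
    and "card K = h + 1"
  shows "\<exists>v\<in>K.
     (\<not> (\<exists>P H. is_path E P \<and> K_avoiding K P \<and> hd P = v \<and> is_hole V E H \<and> last P \<in> H))
   \<or> (\<exists>u H. u \<in> K \<and> E v u \<and> is_hole V E H \<and> {v, u} \<in> hole_edges E H
        \<and> (\<forall>H'. is_hole V E H' \<and> v \<in> H' \<longrightarrow> H' = H))"
proof (rule ccontr)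
  assume contra: "\<not> ?thesis"
  interpret triangle_clique_graph V E K
  proof
    show "K \<subseteq> V" "\<And>x y. x \<in> K \<Longrightarrow> y \<in> K \<Longrightarrow> x \<noteq> y \<Longrightarrow> E x y"
      using assms(5) unfolding is_maximal_clique_def is_clique_def by auto
    show "simple_graph V E" by (rule assms(1))
    show "\<And>a b c. E a b \<Longrightarrow> E b c \<Longrightarrow> E a c \<Longrightarrow> b \<in> K"
      by (rule triangle_in_unique_clique[OF assms(1,7)])
  qed
  let ?on_hole = "\<lambda>v. \<exists>H. is_hole V E H \<and> v \<in> H"
  have reach: "\<exists>P H. is_path E P \<and> K_avoiding K P \<and> hd P = v \<and> is_hole V E H \<and> last P \<in> H"
    if "v \<in> K" for v
    using contra that by blast
  have second_hole: "\<exists>H'. is_hole V E H' \<and> v \<in> H' \<and> H' \<noteq> H"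
    if "v \<in> K" "u \<in> K" "E v u" "is_hole V E H" "{v, u} \<in> hole_edges E H" for v u H
    using contra that by blast
  have "card {v \<in> K. \<not> ?on_hole v} \<le> card {H. is_hole V E H \<and> H \<inter> K = {}}"
    using off_hole_count reach by blast
  moreover have "card {v \<in> K. ?on_hole v} \<le> card {H. is_hole V E H \<and> H \<inter> K \<noteq> {}}"
    using on_hole_count second_hole by blast
  moreover have "card K = card {v \<in> K. ?on_hole v} + card {v \<in> K. \<not> ?on_hole v}"
    using K_finite by (rule card_filter_split)
  moreover have "h = card {H. is_hole V E H \<and> H \<inter> K \<noteq> {}} + card {H. is_hole V E H \<and> H \<inter> K = {}}"
    using card_filter_split[OF finite_holes[OF assms(1)], of "\<lambda>H. H \<inter> K \<noteq> {}"] assms(3) by simp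
  ultimately show False using assms(8) by linarith
qed

end
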